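(* The Directed Simplicial Weisfeiler–Leman (D-SWL) test with the restricted update rule $c^{t+1}_\sigma=\operatorname{HASH}\big(c^t_\sigma,c^t_{\mathcal{B}}(\sigma),((c^{ij}_\uparrow)^t(\sigma))_{i,j}\big)$ is as powerful as D-SWL with the generalised update rule $c^{t+1}_\sigma=\operatorname{HASH}\big(c^t_\sigma,c^t_{\mathcal{B}}(\sigma),c^t_{\mathcal{C}}(\sigma),((c^{ij}_\downarrow)^t(\sigma))_{i,j},((c^{ij}_\uparrow)^t(\sigma))_{i,j}\big)$. That is, for any two directed simplicial complexes $\mathcal{K}_1, \mathcal{K}_2$, the restricted test distinguishes them if and only if the generalised test distinguishes them.
   Context: A directed simplicial complex is a pair $\mathcal{K}=(V,\Sigma)$, where $V$ is a finite vertex set and $\Sigma$ is a collection of non-empty ordered tuples of vertices (directed simplices) that is closed under taking non-empty ordered subtuples. A tuple $\sigma=(v_0,\dots,v_n)$ has dimension $n$. For $0\le i\le n$, the face map $d_i(\sigma)$ is the tuple obtained by deleting the $i$-th vertex and keeping the order of the rest; $d_i^{-1}(\sigma)$ is the set of simplices $\rho$ with $d_i(\rho)=\sigma$. For simplices of equal dimension: - $\tau\in\mathcal{A}^{ij}_\downarrow(\sigma)$ if there is a $\kappa$ with $d_i(\sigma)=\kappa=d_j(\tau)$. - $\tau\in\mathcal{A}^{ij}_\uparrow(\sigma)$ if there is a $\kappa$ with $d_i(\kappa)=\sigma$ and $d_j(\kappa)=\tau$. The D-SWL test assigns colours $c^t$ to all simplices, where $c^0$ is the same colour for every simplex and HASH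 is an injective function. For an $n$-simplex $\sigma$, the following colourings are used: - The boundary colouring is the ordered tuple $c^t_{\mathcal{B}}(\sigma)=(c^t_{d_0(\sigma)},\dots,c^t_{d_n(\sigma)})$, which is empty for vertices. - The coboundary colouring is $c^t_{\mathcal{C}}(\sigma)=\bigcup_{i=0}^{n+1}\{\{c^t_\tau:\tau\in d_i^{-1}(\sigma)\}\}$. - The down colouring is $(c^{ij}_\downarrow)^t(\sigma)=\{\{(c^t_\tau,c^t_\kappa):\tau\in\mathcal{A}^{ij}_\downarrow(\sigma),\ d_i(\sigma)=\kappa=d_j(\tau)\}\}$. - The up colouring is $(c^{ij}_\uparrow)^t(\sigma)=\{\{(c^t_\tau,c^t_\kappa):\tau\in\mathcal{A}^{ij}_\uparrow(\sigma),\ d_i(\kappa)=\sigma,\ d_j(\kappa)=\tau\}\}$. The tuple of down colourings ranges over all index pairs $(i,j)$ for which the face maps are defined, and likewise for the up colourings. Colours are refined until they stabilize. The test distinguishes two complexes if their stable colour histograms differ; the two complexes are coloured jointly, i.e., with the same HASH. *)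

theory Defs
  imports Main "HOL-Library.Multiset"
begin

text \<open>Directed simplices are non-empty lists of vertices; the face map d_i deletes the
  i-th entry.\<close>

definition face :: "nat \<Rightarrow> 'v list \<Rightarrow> 'v list" where
  "face i xs = take i xs @ drop (Suc i) xs"

definition dsc :: "'v set \<Rightarrow> 'v list set \<Rightarrow> bool" where
  "dsc V S \<longleftrightarrow> finite V \<and> finite S \<and> (\<forall>\<sigma>\<in>S. \<sigma> \<noteq> [] \<and> set \<sigma> \<subseteq> V) \<and>
     (\<forall>\<sigma>\<in>S. \<forall>\<rho>\<in>set (subseqs \<sigma>). \<rho> \<noteq> [] \<longrightarrow> \<rho> \<in> S)"

text \<open>Colours are terms of a free datatype; the constructors HashR / HashG play the role of
  the injective HASH functions of the restricted / generalised update rules (shared by both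
  complexes, i.e. joint colouring).\<close>

datatype colour =
    Init
  | HashR colour "colour list" "(colour \<times> colour) multiset list"
  | HashG colour "colour list" "colour multiset" "(colour \<times> colour) multiset list"
          "(colour \<times> colour) multiset list"

text \<open>For an n-simplex \<sigma> (length \<sigma> = n+1).\<close>

definition boundary_col :: "('v list \<Rightarrow> colour) \<Rightarrow> 'v list \<Rightarrow> colour list" where
  "boundary_col c \<sigma> = (if length \<sigma> \<le> 1 then [] else map (\<lambda>i. c (face i \<sigma>)) [0..<length \<sigma>])"

definition coboundary_col :: "'v list set \<Rightarrow> ('v list \<Rightarrow> colour) \<Rightarrow> 'v list \<Rightarrow> colour multiset" where
  "coboundary_col S c \<sigma> =
     (\<Sum>i\<in>{0..length \<sigma>}. image_mset c
        (mset_set {\<rho>\<in>S. length \<rho> = Suc (length \<sigma>) \<and> face i \<rho> = \<sigma>}))"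

definition down_col :: "'v list set \<Rightarrow> ('v list \<Rightarrow> colour) \<Rightarrow> 'v list \<Rightarrow> nat \<Rightarrow> nat
    \<Rightarrow> (colour \<times> colour) multiset" where
  "down_col S c \<sigma> i j = image_mset (\<lambda>(\<tau>, \<kappa>). (c \<tau>, c \<kappa>))
     (mset_set {(\<tau>, \<kappa>). \<tau> \<in> S \<and> \<kappa> \<in> S \<and> length \<tau> = length \<sigma> \<and>
                      face i \<sigma> = \<kappa> \<and> face j \<tau> = \<kappa>})"

definition up_col :: "'v list set \<Rightarrow> ('v list \<Rightarrow> colour) \<Rightarrow> 'v list \<Rightarrow> nat \<Rightarrow> nat
    \<Rightarrow> (colour \<times> colour) multiset" where
  "up_col S c \<sigma> i j = image_mset (\<lambda>(\<tau>, \<kappa>). (c \<tau>, c \<kappa>))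
     (mset_set {(\<tau>, \<kappa>). \<tau> \<in> S \<and> \<kappa> \<in> S \<and> length \<tau> = length \<sigma> \<and>
                      length \<kappa> = Suc (length \<sigma>) \<and> face i \<kappa> = \<sigma> \<and> face j \<kappa> = \<tau>})"

definition downs :: "'v list set \<Rightarrow> ('v list \<Rightarrow> colour) \<Rightarrow> 'v list \<Rightarrow> (colour \<times> colour) multiset list" where
  "downs S c \<sigma> = [down_col S c \<sigma> i j. i \<leftarrow> [0..<length \<sigma>], j \<leftarrow> [0..<length \<sigma>]]"

definition ups :: "'v list set \<Rightarrow> ('v list \<Rightarrow> colour) \<Rightarrow> 'v list \<Rightarrow> (colour \<times> colour) multiset list" where
  "ups S c \<sigma> = [up_col S c \<sigma> i j. i \<leftarrow> [0..<Suc (length \<sigma>)], j \<leftarrow> [0..<Suc (length \<sigma>)]]"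

primrec colR :: "'v list set \<Rightarrow> nat \<Rightarrow> 'v list \<Rightarrow> colour" where
  "colR S 0 \<sigma> = Init"
| "colR S (Suc t) \<sigma> = HashR (colR S t \<sigma>) (boundary_col (colR S t) \<sigma>) (ups S (colR S t) \<sigma>)"

primrec colG :: "'v list set \<Rightarrow> nat \<Rightarrow> 'v list \<Rightarrow> colour" where
  "colG S 0 \<sigma> = Init"
| "colG S (Suc t) \<sigma> = HashG (colG S t \<sigma>) (boundary_col (colG S t) \<sigma>)
      (coboundary_col S (colG S t) \<sigma>) (downs S (colG S t) \<sigma>) (ups S (colG S t) \<sigma>)"

definition jdom :: "'v list set \<Rightarrow> 'v list set \<Rightarrow> ('v list + 'v list) set" where
  "jdom S1 S2 = Inl ` S1 \<union> Inr ` S2"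

definition jcol :: "('v list set \<Rightarrow> nat \<Rightarrow> 'v list \<Rightarrow> colour) \<Rightarrow> 'v list set \<Rightarrow> 'v list set
    \<Rightarrow> nat \<Rightarrow> ('v list + 'v list) \<Rightarrow> colour" where
  "jcol F S1 S2 t x = (case x of Inl \<sigma> \<Rightarrow> F S1 t \<sigma> | Inr \<sigma> \<Rightarrow> F S2 t \<sigma>)"

definition stab_time :: "('v list set \<Rightarrow> nat \<Rightarrow> 'v list \<Rightarrow> colour) \<Rightarrow> 'v list set \<Rightarrow> 'v list set \<Rightarrow> nat" where
  "stab_time F S1 S2 = (LEAST T. \<forall>x\<in>jdom S1 S2. \<forall>y\<in>jdom S1 S2.
      (jcol F S1 S2 T x = jcol F S1 S2 T y) \<longleftrightarrow> (jcol F S1 S2 (Suc T) x = jcol F S1 S2 (Suc T) y))"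

definition histogram :: "('v list set \<Rightarrow> nat \<Rightarrow> 'v list \<Rightarrow> colour) \<Rightarrow> 'v list set \<Rightarrow> nat \<Rightarrow> colour multiset" where
  "histogram F S t = image_mset (F S t) (mset_set S)"

definition distinguishes :: "('v list set \<Rightarrow> nat \<Rightarrow> 'v list \<Rightarrow> colour) \<Rightarrow> 'v list set \<Rightarrow> 'v list set \<Rightarrow> bool" where
  "distinguishes F S1 S2 \<longleftrightarrow>
     histogram F S1 (stab_time F S1 S2) \<noteq> histogram F S2 (stab_time F S1 S2)"

end

theory Submission
  imports Defs
begin

(* Both refinements only ever split colour classes, and once a round of the joint colouring
   induces the same partition as the round before, every later round does too; hence a test
   distinguishes two complexes iff some round has different histograms.
   Restricted round t is a function of generalised round t, since the restricted rule uses part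
   of the generalised data.  Conversely, generalised round t is a function of restricted round 2t:
   the up colouring of \<sigma> at (i, 0) pairs every coface \<kappa> with d_i \<kappa> = \<sigma> with d_0 \<kappa>, so it contains
   the i-th part of the coboundary colouring; and the down colouring at (i, j) pairs the j-th part
   of the coboundary colouring of d_i \<sigma> with the colour of d_i \<sigma>, both of which the next
   restricted round of \<sigma> sees through its boundary colouring. *)

lemma length_face: "i < length xs \<Longrightarrow> length (face i xs) = length xs - 1"
  unfolding face_def by auto

lemma face_in_subseqs: "i < length xs \<Longrightarrow> face i xs \<in> set (subseqs xs)"
proof (induction xs arbitrary: i)
  case Nil
  then show ?case by simp
next
  case (Cons x xs)
  then show ?case
    by (cases i) (auto simp: face_def Let_def subseqs_refl)
qed

definition cofaces :: "'v list set \<Rightarrow> nat \<Rightarrow> 'v list \<Rightarrow> 'v list set" where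
  "cofaces S i \<sigma> = {\<rho>\<in>S. length \<rho> = Suc (length \<sigma>) \<and> face i \<rho> = \<sigma>}"

lemma cofaces_subset: "cofaces S i \<sigma> \<subseteq> S"
  unfolding cofaces_def by blast

lemma coboundary_col_cofaces:
  "coboundary_col S c \<sigma> = (\<Sum>i\<in>{0..length \<sigma>}. image_mset c (mset_set (cofaces S i \<sigma>)))"
  unfolding coboundary_col_def cofaces_def ..

lemma nth_grid:
  assumes "i < m" "j < n"
  shows "[u i j. i \<leftarrow> [0..<m], j \<leftarrow> [0..<n]] ! (i * n + j) = u i j"
proof -
  have grid: "[u i j. i \<leftarrow> [0..<m], j \<leftarrow> [0..<n]] = map (case_prod u) (List.product [0..<m] [0..<n])"
    by (simp add: product_concat_map map_concat comp_def)
  have "i * n + j < Suc i * n" using assms(2) by simp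
  also have "\<dots> \<le> m * n" using assms(1) by (intro mult_le_mono1) simp
  finally show ?thesis unfolding grid using assms by (simp add: product_nth)
qed

lemma nth_ups:
  "i \<le> length \<sigma> \<Longrightarrow> j \<le> length \<sigma> \<Longrightarrow> ups S c \<sigma> ! (i * Suc (length \<sigma>) + j) = up_col S c \<sigma> i j"
  unfolding ups_def by (rule nth_grid) simp_all

lemma image_mset_mset_set_relabel:
  assumes "\<forall>x\<in>A. a x = g (b x)"
  shows "image_mset a (mset_set A) = image_mset g (image_mset b (mset_set A))"
proof (cases "finite A")
  case True
  then show ?thesis
    unfolding image_mset.compositionality using assms by (intro image_mset_cong) auto
qed simp

lemma coboundary_col_relabel:
  assumes "\<forall>x\<in>S. c' x = h (c x)"
  shows "coboundary_col S c' \<sigma> = image_mset h (coboundary_col S c \<sigma>)"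
proof -
  have "image_mset c' (mset_set (cofaces S i \<sigma>)) = image_mset h (image_mset c (mset_set (cofaces S i \<sigma>)))"
    for i using assms cofaces_subset by (intro image_mset_mset_set_relabel) blast
  then show ?thesis
    unfolding coboundary_col_cofaces by (simp add: sum_comp_morphism[of "image_mset h", symmetric] comp_def)
qed

lemma down_col_relabel:
  assumes "\<forall>x\<in>S. c' x = h (c x)"
  shows "down_col S c' \<sigma> i j = image_mset (map_prod h h) (down_col S c \<sigma> i j)"
  unfolding down_col_def using assms by (intro image_mset_mset_set_relabel) auto

lemma up_col_relabel:
  assumes "\<forall>x\<in>S. c' x = h (c x)"
  shows "up_col S c' \<sigma> i j = image_mset (map_prod h h) (up_col S c \<sigma> i j)"
  unfolding up_col_def using assms by (intro image_mset_mset_set_relabel) auto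

lemma downs_relabel:
  assumes "\<forall>x\<in>S. c' x = h (c x)"
  shows "downs S c' \<sigma> = map (image_mset (map_prod h h)) (downs S c \<sigma>)"
proof -
  have "down_col S c' \<sigma> i = (\<lambda>j. image_mset (map_prod h h) (down_col S c \<sigma> i j))" for i
    using assms by (intro ext down_col_relabel)
  then show ?thesis unfolding downs_def by (simp add: map_concat comp_def)
qed

lemma ups_relabel:
  assumes "\<forall>x\<in>S. c' x = h (c x)"
  shows "ups S c' \<sigma> = map (image_mset (map_prod h h)) (ups S c \<sigma>)"
proof -
  have "up_col S c' \<sigma> i = (\<lambda>j. image_mset (map_prod h h) (up_col S c \<sigma> i j))" for i
    using assms by (intro ext up_col_relabel)
  then show ?thesis unfolding ups_def by (simp add: map_concat comp_def)
qed

section \<open>One round of each refinement, and how to decode it\<close>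

definition restricted_update :: "'v list set \<Rightarrow> ('v list \<Rightarrow> colour) \<Rightarrow> 'v list \<Rightarrow> colour" where
  "restricted_update S c \<sigma> = HashR (c \<sigma>) (boundary_col c \<sigma>) (ups S c \<sigma>)"

definition generalised_update :: "'v list set \<Rightarrow> ('v list \<Rightarrow> colour) \<Rightarrow> 'v list \<Rightarrow> colour" where
  "generalised_update S c \<sigma> =
     HashG (c \<sigma>) (boundary_col c \<sigma>) (coboundary_col S c \<sigma>) (downs S c \<sigma>) (ups S c \<sigma>)"

lemma colR_Suc: "colR S (Suc t) = restricted_update S (colR S t)"
  by (simp add: fun_eq_iff restricted_update_def)

lemma colG_Suc: "colG S (Suc t) = generalised_update S (colG S t)"
  by (simp add: fun_eq_iff generalised_update_def)

fun prev_colour :: "colour \<Rightarrow> colour" where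
  "prev_colour Init = Init"
| "prev_colour (HashR a b e) = a"
| "prev_colour (HashG a b c d e) = a"

lemma prev_colour_restricted_update [simp]: "prev_colour (restricted_update S c \<sigma>) = c \<sigma>"
  by (simp add: restricted_update_def)

lemma prev_colour_generalised_update [simp]: "prev_colour (generalised_update S c \<sigma>) = c \<sigma>"
  by (simp add: generalised_update_def)

fun relabel :: "(colour \<Rightarrow> colour) \<Rightarrow> colour \<Rightarrow> colour" where
  "relabel h Init = Init"
| "relabel h (HashR a b e) = HashR (h a) (map h b) (map (image_mset (map_prod h h)) e)"
| "relabel h (HashG a b c d e) = HashG (h a) (map h b) (image_mset h c)
     (map (image_mset (map_prod h h)) d) (map (image_mset (map_prod h h)) e)"

fun restricted_of_generalised :: "(colour \<Rightarrow> colour) \<Rightarrow> colour \<Rightarrow> colour" where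
  "restricted_of_generalised g (HashG a b c d e) = HashR (g a) (map g b) (map (image_mset (map_prod g g)) e)"
| "restricted_of_generalised g _ = Init"

fun up_part :: "colour \<Rightarrow> (colour \<times> colour) multiset list" where
  "up_part (HashR a b e) = e"
| "up_part _ = []"

definition length_of_boundary :: "'a list \<Rightarrow> nat" where
  "length_of_boundary b = (if b = [] then 1 else length b)"

lemma length_of_boundary_col: "\<sigma> \<noteq> [] \<Longrightarrow> length_of_boundary (boundary_col c \<sigma>) = length \<sigma>"
  unfolding length_of_boundary_def boundary_col_def by (cases \<sigma>) auto

(* ups lists the up colourings row by row, so entry i * m is the one at (i, 0); its second
   components form the i-th part of the coboundary colouring. *)
definition coboundary_of_ups :: "nat \<Rightarrow> (colour \<times> colour) multiset list \<Rightarrow> colour multiset" where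
  "coboundary_of_ups m e = (\<Sum>i<m. image_mset snd (e ! (i * m)))"

(* For a simplex of length m \<ge> 2, entry i of its next-round boundary colouring is the next-round
   colour of d_i \<sigma>, which records the colour of d_i \<sigma> and its up colouring at (j, 0).  Vertices have
   empty boundary colouring and only the empty down colouring. *)
definition downs_of_boundary :: "colour list \<Rightarrow> (colour \<times> colour) multiset list" where
  "downs_of_boundary b = (let m = length_of_boundary b in
     [if m = 1 then {#} else image_mset (\<lambda>p. (snd p, prev_colour (b ! i))) (up_part (b ! i) ! (j * m)).
      i \<leftarrow> [0..<m], j \<leftarrow> [0..<m]])"

fun generalised_of_restricted :: "(colour \<Rightarrow> colour) \<Rightarrow> colour \<Rightarrow> colour" where
  "generalised_of_restricted g (HashR a b e) = (let h = g \<circ> prev_colour in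
     HashG (h a) (map h b) (image_mset h (coboundary_of_ups (Suc (length_of_boundary b)) e))
       (map (image_mset (map_prod g g)) (downs_of_boundary b)) (map (image_mset (map_prod h h)) e))"
| "generalised_of_restricted g _ = Init"

context
  fixes V :: "'v set" and S :: "'v list set"
  assumes dsc: "dsc V S"
begin

lemma dsc_nonempty: "\<sigma> \<in> S \<Longrightarrow> \<sigma> \<noteq> []"
  using dsc unfolding dsc_def by blast

lemma dsc_face:
  assumes "\<sigma> \<in> S" "2 \<le> length \<sigma>" "i < length \<sigma>"
  shows "face i \<sigma> \<in> S"
proof -
  have "face i \<sigma> \<noteq> []" using length_face[OF assms(3)] assms(2) by auto
  then show ?thesis using dsc assms face_in_subseqs[OF assms(3)] unfolding dsc_def by blast
qed

lemma boundary_col_relabel: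
  assumes "\<forall>x\<in>S. c' x = h (c x)" "\<sigma> \<in> S"
  shows "boundary_col c' \<sigma> = map h (boundary_col c \<sigma>)"
  using assms dsc_face[OF assms(2)] unfolding boundary_col_def by auto

lemma restricted_update_relabel:
  assumes "\<forall>x\<in>S. c' x = h (c x)" "\<sigma> \<in> S"
  shows "restricted_update S c' \<sigma> = relabel h (restricted_update S c \<sigma>)"
proof -
  have "boundary_col c' \<sigma> = map h (boundary_col c \<sigma>)"
    using assms by (rule boundary_col_relabel)
  moreover have "ups S c' \<sigma> = map (image_mset (map_prod h h)) (ups S c \<sigma>)"
    using assms(1) by (rule ups_relabel)
  ultimately show ?thesis
    using assms by (simp add: restricted_update_def)
qed

lemma generalised_update_relabel:
  assumes "\<forall>x\<in>S. c' x = h (c x)" "\<sigma> \<in> S"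
  shows "generalised_update S c' \<sigma> = relabel h (generalised_update S c \<sigma>)"
proof -
  have "boundary_col c' \<sigma> = map h (boundary_col c \<sigma>)"
    using assms by (rule boundary_col_relabel)
  moreover have "coboundary_col S c' \<sigma> = image_mset h (coboundary_col S c \<sigma>)"
    using assms(1) by (rule coboundary_col_relabel)
  moreover have "downs S c' \<sigma> = map (image_mset (map_prod h h)) (downs S c \<sigma>)"
    using assms(1) by (rule downs_relabel)
  moreover have "ups S c' \<sigma> = map (image_mset (map_prod h h)) (ups S c \<sigma>)"
    using assms(1) by (rule ups_relabel)
  ultimately show ?thesis
    using assms by (simp add: generalised_update_def)
qed

lemma restricted_update_from_generalised:
  assumes "\<forall>x\<in>S. c' x = g (c x)" "\<sigma> \<in> S"
  shows "restricted_update S c' \<sigma> = restricted_of_generalised g (generalised_update S c \<sigma>)"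
proof -
  have "boundary_col c' \<sigma> = map g (boundary_col c \<sigma>)"
    using assms by (rule boundary_col_relabel)
  moreover have "ups S c' \<sigma> = map (image_mset (map_prod g g)) (ups S c \<sigma>)"
    using assms(1) by (rule ups_relabel)
  ultimately show ?thesis
    using assms by (simp add: restricted_update_def generalised_update_def)
qed

lemma up_col_snd_eq_cofaces:
  assumes "\<sigma> \<in> S"
  shows "image_mset snd (up_col S c \<sigma> i 0) = image_mset c (mset_set (cofaces S i \<sigma>))"
proof -
  let ?A = "{(\<tau>, \<kappa>). \<tau> \<in> S \<and> \<kappa> \<in> S \<and> length \<tau> = length \<sigma> \<and>
                      length \<kappa> = Suc (length \<sigma>) \<and> face i \<kappa> = \<sigma> \<and> face 0 \<kappa> = \<tau>}"
  have "face 0 \<kappa> \<in> S \<and> length (face 0 \<kappa>) = length \<sigma>" if "\<kappa> \<in> cofaces S i \<sigma>" for \<kappa>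
  proof -
    have "2 \<le> length \<kappa>" using that dsc_nonempty[OF assms] by (cases \<sigma>) (auto simp: cofaces_def)
    then show ?thesis using that dsc_face length_face[of 0 \<kappa>] by (auto simp: cofaces_def)
  qed
  then have "?A = (\<lambda>\<kappa>. (face 0 \<kappa>, \<kappa>)) ` cofaces S i \<sigma>"
    by (auto simp: cofaces_def image_iff)
  moreover have "inj_on (\<lambda>\<kappa>. (face 0 \<kappa>, \<kappa>)) (cofaces S i \<sigma>)"
    by (rule inj_onI) simp
  ultimately have "mset_set ?A = image_mset (\<lambda>\<kappa>. (face 0 \<kappa>, \<kappa>)) (mset_set (cofaces S i \<sigma>))"
    by (simp add: image_mset_mset_set)
  then show ?thesis
    unfolding up_col_def by (simp add: image_mset.compositionality comp_def)
qed

lemma down_col_eq_cofaces: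
  assumes "\<sigma> \<in> S" "2 \<le> length \<sigma>" "i < length \<sigma>"
  shows "down_col S c \<sigma> i j =
    image_mset (\<lambda>\<tau>. (c \<tau>, c (face i \<sigma>))) (mset_set (cofaces S j (face i \<sigma>)))"
proof -
  let ?\<kappa> = "face i \<sigma>"
  let ?A = "{(\<tau>, \<kappa>). \<tau> \<in> S \<and> \<kappa> \<in> S \<and> length \<tau> = length \<sigma> \<and> face i \<sigma> = \<kappa> \<and> face j \<tau> = \<kappa>}"
  have "?\<kappa> \<in> S" "Suc (length ?\<kappa>) = length \<sigma>"
    using dsc_face[OF assms] length_face[OF assms(3)] assms(2) by auto
  then have "?A = (\<lambda>\<tau>. (\<tau>, ?\<kappa>)) ` cofaces S j ?\<kappa>"
    by (auto simp: cofaces_def)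
  moreover have "inj_on (\<lambda>\<tau>. (\<tau>, ?\<kappa>)) (cofaces S j ?\<kappa>)"
    by (rule inj_onI) simp
  ultimately have "mset_set ?A = image_mset (\<lambda>\<tau>. (\<tau>, ?\<kappa>)) (mset_set (cofaces S j ?\<kappa>))"
    by (simp add: image_mset_mset_set)
  then show ?thesis
    unfolding down_col_def by (simp add: image_mset.compositionality comp_def)
qed

lemma down_col_vertex:
  assumes "length \<sigma> = 1" "i < length \<sigma>"
  shows "down_col S c \<sigma> i j = {#}"
proof -
  have "face i \<sigma> = []" using assms length_face[of i \<sigma>] by simp
  then have no_pairs: "{(\<tau>, \<kappa>). \<tau> \<in> S \<and> \<kappa> \<in> S \<and> length \<tau> = length \<sigma> \<and> face i \<sigma> = \<kappa> \<and> face j \<tau> = \<kappa>} = {}"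
    using dsc_nonempty by blast
  show ?thesis
    unfolding down_col_def no_pairs by simp
qed

lemma coboundary_col_eq_coboundary_of_ups:
  assumes "\<sigma> \<in> S"
  shows "coboundary_col S c \<sigma> = coboundary_of_ups (Suc (length \<sigma>)) (ups S c \<sigma>)"
proof -
  have "image_mset snd (ups S c \<sigma> ! (i * Suc (length \<sigma>))) = image_mset c (mset_set (cofaces S i \<sigma>))"
    if "i < Suc (length \<sigma>)" for i
    using nth_ups[of i \<sigma> 0] that up_col_snd_eq_cofaces[OF assms] by simp
  then show ?thesis
    unfolding coboundary_col_cofaces coboundary_of_ups_def lessThan_Suc_atMost atLeast0AtMost[symmetric]
    by (intro sum.cong) auto
qed

lemma downs_eq_downs_of_boundary:
  assumes "\<sigma> \<in> S"
  shows "downs S c \<sigma> = downs_of_boundary (boundary_col (restricted_update S c) \<sigma>)"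
proof -
  let ?b = "boundary_col (restricted_update S c) \<sigma>"
  have "down_col S c \<sigma> i j = (if length \<sigma> = 1 then {#} else
      image_mset (\<lambda>p. (snd p, prev_colour (?b ! i))) (up_part (?b ! i) ! (j * length \<sigma>)))"
    if ij: "i < length \<sigma>" "j < length \<sigma>" for i j
  proof (cases "length \<sigma> = 1")
    case True
    then show ?thesis using down_col_vertex ij(1) by simp
  next
    case False
    then have len: "2 \<le> length \<sigma>" using ij by linarith
    let ?\<kappa> = "face i \<sigma>"
    have \<kappa>: "?\<kappa> \<in> S" "Suc (length ?\<kappa>) = length \<sigma>"
      using dsc_face[OF assms len ij(1)] length_face[OF ij(1)] len by auto
    have "?b ! i = restricted_update S c ?\<kappa>"
      using len ij unfolding boundary_col_def by simp
    moreover have "ups S c ?\<kappa> ! (j * length \<sigma>) = up_col S c ?\<kappa> j 0"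
      using nth_ups[of j ?\<kappa> 0] \<kappa>(2) ij(2) by simp
    ultimately have "image_mset (\<lambda>p. (snd p, prev_colour (?b ! i))) (up_part (?b ! i) ! (j * length \<sigma>))
        = image_mset (\<lambda>a. (a, c ?\<kappa>)) (image_mset snd (up_col S c ?\<kappa> j 0))"
      by (simp add: restricted_update_def image_mset.compositionality comp_def)
    also have "\<dots> = down_col S c \<sigma> i j"
      unfolding up_col_snd_eq_cofaces[OF \<kappa>(1)] down_col_eq_cofaces[OF assms len ij(1)]
      by (simp add: image_mset.compositionality comp_def)
    finally show ?thesis
      using False by simp
  qed
  moreover have "length_of_boundary ?b = length \<sigma>"
    using length_of_boundary_col dsc_nonempty[OF assms] by blast
  ultimately show ?thesis
    unfolding downs_def downs_of_boundary_def Let_def by (auto intro!: arg_cong[where f=concat] map_cong)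
qed

lemma generalised_update_from_restricted:
  assumes "\<forall>x\<in>S. c' x = g (c x)" "\<sigma> \<in> S"
  shows "generalised_update S c' \<sigma> =
    generalised_of_restricted g (restricted_update S (restricted_update S c) \<sigma>)"
proof -
  let ?c1 = "restricted_update S c" and ?h = "g \<circ> prev_colour"
  have c': "\<forall>x\<in>S. c' x = ?h (?c1 x)"
    using assms(1) by simp
  have "boundary_col c' \<sigma> = map ?h (boundary_col ?c1 \<sigma>)"
    using c' assms(2) by (rule boundary_col_relabel)
  moreover have "coboundary_col S c' \<sigma> = image_mset ?h (coboundary_col S ?c1 \<sigma>)"
    using c' by (rule coboundary_col_relabel)
  moreover have "downs S c' \<sigma> = map (image_mset (map_prod g g)) (downs S c \<sigma>)"
    using assms(1) by (rule downs_relabel)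
  moreover have "ups S c' \<sigma> = map (image_mset (map_prod ?h ?h)) (ups S ?c1 \<sigma>)"
    using c' by (rule ups_relabel)
  moreover have "length_of_boundary (boundary_col ?c1 \<sigma>) = length \<sigma>"
    using length_of_boundary_col dsc_nonempty[OF assms(2)] by blast
  ultimately show ?thesis
    using c' assms(2) coboundary_col_eq_coboundary_of_ups[OF assms(2)] downs_eq_downs_of_boundary[OF assms(2)]
    by (simp add: restricted_update_def generalised_update_def Let_def)
qed

end

section \<open>Joint determination and stabilisation\<close>

definition determined_by :: "('x set \<Rightarrow> 'x \<Rightarrow> 'a) \<Rightarrow> ('x set \<Rightarrow> 'x \<Rightarrow> 'b) \<Rightarrow> 'x set \<Rightarrow> 'x set \<Rightarrow> bool" where
  "determined_by A B S1 S2 \<longleftrightarrow> (\<exists>g. (\<forall>\<sigma>\<in>S1. A S1 \<sigma> = g (B S1 \<sigma>)) \<and> (\<forall>\<sigma>\<in>S2. A S2 \<sigma> = g (B S2 \<sigma>)))"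

lemma determined_by_refl: "determined_by A A S1 S2"
  unfolding determined_by_def by (rule exI[of _ id]) simp

lemma determined_by_trans:
  assumes "determined_by A B S1 S2" "determined_by B C S1 S2"
  shows "determined_by A C S1 S2"
proof -
  obtain g where "\<forall>\<sigma>\<in>S1. A S1 \<sigma> = g (B S1 \<sigma>)" "\<forall>\<sigma>\<in>S2. A S2 \<sigma> = g (B S2 \<sigma>)"
    using assms(1) unfolding determined_by_def by blast
  moreover obtain g' where "\<forall>\<sigma>\<in>S1. B S1 \<sigma> = g' (C S1 \<sigma>)" "\<forall>\<sigma>\<in>S2. B S2 \<sigma> = g' (C S2 \<sigma>)"
    using assms(2) unfolding determined_by_def by blast
  ultimately show ?thesis
    unfolding determined_by_def by (intro exI[of _ "g \<circ> g'"]) simp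
qed

lemma determined_by_lift:
  assumes "determined_by A B S1 S2"
    and "\<And>S g. S \<in> {S1, S2} \<Longrightarrow> \<forall>\<sigma>\<in>S. A S \<sigma> = g (B S \<sigma>) \<Longrightarrow> \<forall>\<sigma>\<in>S. A' S \<sigma> = L g (B' S \<sigma>)"
  shows "determined_by A' B' S1 S2"
proof -
  obtain g where "\<forall>\<sigma>\<in>S1. A S1 \<sigma> = g (B S1 \<sigma>)" "\<forall>\<sigma>\<in>S2. A S2 \<sigma> = g (B S2 \<sigma>)"
    using assms(1) unfolding determined_by_def by blast
  then have "\<forall>\<sigma>\<in>S1. A' S1 \<sigma> = L g (B' S1 \<sigma>)" "\<forall>\<sigma>\<in>S2. A' S2 \<sigma> = L g (B' S2 \<sigma>)"
    using assms(2)[of S1 g] assms(2)[of S2 g] by simp_all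
  then show ?thesis
    unfolding determined_by_def by blast
qed

lemma determined_by_image_mset_eq:
  assumes "determined_by A B S1 S2"
    and "image_mset (B S1) (mset_set S1) = image_mset (B S2) (mset_set S2)"
  shows "image_mset (A S1) (mset_set S1) = image_mset (A S2) (mset_set S2)"
proof -
  obtain g where g: "\<forall>\<sigma>\<in>S1. A S1 \<sigma> = g (B S1 \<sigma>)" "\<forall>\<sigma>\<in>S2. A S2 \<sigma> = g (B S2 \<sigma>)"
    using assms(1) unfolding determined_by_def by blast
  have "image_mset (A S1) (mset_set S1) = image_mset g (image_mset (B S1) (mset_set S1))"
    using g(1) by (rule image_mset_mset_set_relabel)
  also have "\<dots> = image_mset g (image_mset (B S2) (mset_set S2))"
    using assms(2) by simp
  also have "\<dots> = image_mset (A S2) (mset_set S2)"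
    using g(2) by (rule image_mset_mset_set_relabel[symmetric])
  finally show ?thesis .
qed

lemma ex_factorisation_iff:
  "(\<exists>g. \<forall>x\<in>J. f x = g (k x)) \<longleftrightarrow> (\<forall>x\<in>J. \<forall>y\<in>J. k x = k y \<longrightarrow> f x = f y)"
proof
  assume "\<forall>x\<in>J. \<forall>y\<in>J. k x = k y \<longrightarrow> f x = f y"
  then have "\<forall>x\<in>J. f x = f (SOME y. y \<in> J \<and> k y = k x)"
    by (metis (mono_tags, lifting) someI)
  then show "\<exists>g. \<forall>x\<in>J. f x = g (k x)"
    by (intro exI[of _ "\<lambda>v. f (SOME y. y \<in> J \<and> k y = v)"])
qed auto

lemma determined_by_iff_jcol:
  "determined_by (\<lambda>S. F S t) (\<lambda>S. F S s) S1 S2 \<longleftrightarrow>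
    (\<forall>x\<in>jdom S1 S2. \<forall>y\<in>jdom S1 S2. jcol F S1 S2 s x = jcol F S1 S2 s y \<longrightarrow> jcol F S1 S2 t x = jcol F S1 S2 t y)"
proof -
  have "determined_by (\<lambda>S. F S t) (\<lambda>S. F S s) S1 S2 \<longleftrightarrow>
      (\<exists>g. \<forall>x\<in>jdom S1 S2. jcol F S1 S2 t x = g (jcol F S1 S2 s x))"
    unfolding determined_by_def jdom_def jcol_def by (simp add: ball_Un)
  then show ?thesis
    by (simp only: ex_factorisation_iff)
qed

lemma refining_colourings_stabilise:
  fixes c :: "nat \<Rightarrow> 'x \<Rightarrow> 'a"
  assumes "finite J" and "\<And>t x y. x \<in> J \<Longrightarrow> y \<in> J \<Longrightarrow> c (Suc t) x = c (Suc t) y \<Longrightarrow> c t x = c t y"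
  shows "\<exists>T. \<forall>x\<in>J. \<forall>y\<in>J. c T x = c T y \<longleftrightarrow> c (Suc T) x = c (Suc T) y"
proof -
  define K where "K t = {(x, y) \<in> J \<times> J. c t x = c t y}" for t
  have "K (Suc t) \<subseteq> K t" for t
    using assms(2) unfolding K_def by auto
  moreover have "finite (K t)" for t
    using assms(1) unfolding K_def by (auto intro: finite_subset[of _ "J \<times> J"])
  moreover have "\<not> (\<forall>t. (K (Suc t), K t) \<in> finite_psubset)"
    using wf_finite_psubset wf_iff_no_infinite_down_chain by blast
  ultimately obtain T where "K (Suc T) = K T"
    unfolding finite_psubset_def by blast
  then show ?thesis
    unfolding K_def by (auto simp: set_eq_iff)
qed

context
  fixes F :: "'v list set \<Rightarrow> nat \<Rightarrow> 'v list \<Rightarrow> colour" and S1 S2 :: "'v list set"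
  assumes finite: "finite S1" "finite S2"
    and refines: "\<And>t. determined_by (\<lambda>S. F S t) (\<lambda>S. F S (Suc t)) S1 S2"
    and stable: "\<And>t. determined_by (\<lambda>S. F S (Suc t)) (\<lambda>S. F S t) S1 S2 \<Longrightarrow>
                      determined_by (\<lambda>S. F S (Suc (Suc t))) (\<lambda>S. F S (Suc t)) S1 S2"
begin

lemma stab_time_stable:
  "determined_by (\<lambda>S. F S (Suc (stab_time F S1 S2))) (\<lambda>S. F S (stab_time F S1 S2)) S1 S2"
proof -
  let ?J = "jdom S1 S2" and ?c = "jcol F S1 S2"
  have "\<exists>T. \<forall>x\<in>?J. \<forall>y\<in>?J. ?c T x = ?c T y \<longleftrightarrow> ?c (Suc T) x = ?c (Suc T) y"
  proof (rule refining_colourings_stabilise)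
    show "finite ?J"
      using finite unfolding jdom_def by simp
    show "?c t x = ?c t y" if "x \<in> ?J" "y \<in> ?J" "?c (Suc t) x = ?c (Suc t) y" for t x y
      using refines[of t] that unfolding determined_by_iff_jcol by blast
  qed
  then have "\<forall>x\<in>?J. \<forall>y\<in>?J. ?c (stab_time F S1 S2) x = ?c (stab_time F S1 S2) y \<longleftrightarrow>
      ?c (Suc (stab_time F S1 S2)) x = ?c (Suc (stab_time F S1 S2)) y"
    unfolding stab_time_def by (rule LeastI_ex)
  then show ?thesis
    unfolding determined_by_iff_jcol by blast
qed

lemma determined_by_later_round: "s \<le> t \<Longrightarrow> determined_by (\<lambda>S. F S s) (\<lambda>S. F S t) S1 S2"
proof (induction t rule: dec_induct)
  case (step t)
  then show ?case using determined_by_trans refines by blast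
qed (rule determined_by_refl)

lemma determined_by_stable_round:
  assumes "determined_by (\<lambda>S. F S (Suc T)) (\<lambda>S. F S T) S1 S2" "T \<le> t"
  shows "determined_by (\<lambda>S. F S t) (\<lambda>S. F S T) S1 S2"
proof -
  have "determined_by (\<lambda>S. F S (Suc t)) (\<lambda>S. F S t) S1 S2 \<and> determined_by (\<lambda>S. F S t) (\<lambda>S. F S T) S1 S2"
    using assms(2)
  proof (induction t rule: dec_induct)
    case base
    then show ?case using assms(1) determined_by_refl by blast
  next
    case (step t)
    then show ?case using stable determined_by_trans by blast
  qed
  then show ?thesis by blast
qed

lemma distinguishes_iff_histograms_differ:
  "distinguishes F S1 S2 \<longleftrightarrow> (\<exists>t. histogram F S1 t \<noteq> histogram F S2 t)"
proof
  assume "\<exists>t. histogram F S1 t \<noteq> histogram F S2 t"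
  then obtain t where "histogram F S1 t \<noteq> histogram F S2 t" by blast
  moreover have "determined_by (\<lambda>S. F S t) (\<lambda>S. F S (stab_time F S1 S2)) S1 S2"
    using determined_by_later_round determined_by_stable_round[OF stab_time_stable] by (cases "t \<le> stab_time F S1 S2") auto
  ultimately show "distinguishes F S1 S2"
    unfolding distinguishes_def histogram_def using determined_by_image_mset_eq by blast
qed (auto simp: distinguishes_def)

end

section \<open>Comparing the two refinements\<close>

lemma colR_stability_propagates:
  assumes "dsc V1 S1" "dsc V2 S2" "determined_by (\<lambda>S. colR S (Suc t)) (\<lambda>S. colR S t) S1 S2"
  shows "determined_by (\<lambda>S. colR S (Suc (Suc t))) (\<lambda>S. colR S (Suc t)) S1 S2"
  using assms(3)
proof (rule determined_by_lift)
  fix S g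
  assume "S \<in> {S1, S2}" and g: "\<forall>\<sigma>\<in>S. colR S (Suc t) \<sigma> = g (colR S t \<sigma>)"
  then obtain V where "dsc V S" using assms(1,2) by blast
  then show "\<forall>\<sigma>\<in>S. colR S (Suc (Suc t)) \<sigma> = relabel g (colR S (Suc t) \<sigma>)"
    using g unfolding colR_Suc by (blast intro: restricted_update_relabel)
qed

lemma colG_stability_propagates:
  assumes "dsc V1 S1" "dsc V2 S2" "determined_by (\<lambda>S. colG S (Suc t)) (\<lambda>S. colG S t) S1 S2"
  shows "determined_by (\<lambda>S. colG S (Suc (Suc t))) (\<lambda>S. colG S (Suc t)) S1 S2"
  using assms(3)
proof (rule determined_by_lift)
  fix S g
  assume "S \<in> {S1, S2}" and g: "\<forall>\<sigma>\<in>S. colG S (Suc t) \<sigma> = g (colG S t \<sigma>)"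
  then obtain V where "dsc V S" using assms(1,2) by blast
  then show "\<forall>\<sigma>\<in>S. colG S (Suc (Suc t)) \<sigma> = relabel g (colG S (Suc t) \<sigma>)"
    using g unfolding colG_Suc by (blast intro: generalised_update_relabel)
qed

lemma colR_determined_by_colG:
  assumes "dsc V1 S1" "dsc V2 S2"
  shows "determined_by (\<lambda>S. colR S t) (\<lambda>S. colG S t) S1 S2"
proof (induction t)
  case 0
  show ?case unfolding determined_by_def by (intro exI[of _ id]) simp
next
  case (Suc t)
  then show ?case
  proof (rule determined_by_lift)
    fix S g
    assume "S \<in> {S1, S2}" and g: "\<forall>\<sigma>\<in>S. colR S t \<sigma> = g (colG S t \<sigma>)"
    then obtain V where "dsc V S" using assms by blast
    then show "\<forall>\<sigma>\<in>S. colR S (Suc t) \<sigma> = restricted_of_generalised g (colG S (Suc t) \<sigma>)"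
      using g unfolding colR_Suc colG_Suc by (blast intro: restricted_update_from_generalised)
  qed
qed

lemma colG_determined_by_colR:
  assumes "dsc V1 S1" "dsc V2 S2"
  shows "determined_by (\<lambda>S. colG S t) (\<lambda>S. colR S (2 * t)) S1 S2"
proof (induction t)
  case 0
  show ?case unfolding determined_by_def by (intro exI[of _ id]) simp
next
  case (Suc t)
  then show ?case
  proof (rule determined_by_lift)
    fix S g
    assume "S \<in> {S1, S2}" and g: "\<forall>\<sigma>\<in>S. colG S t \<sigma> = g (colR S (2 * t) \<sigma>)"
    then obtain V where "dsc V S" using assms by blast
    then show "\<forall>\<sigma>\<in>S. colG S (Suc t) \<sigma> = generalised_of_restricted g (colR S (2 * Suc t) \<sigma>)"
      using g unfolding mult_Suc_right add_2_eq_Suc colR_Suc colG_Suc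
      by (blast intro: generalised_update_from_restricted)
  qed
qed

theorem lemma1:
  fixes V1 V2 :: "'v set" and S1 S2 :: "'v list set"
  assumes "dsc V1 S1" and "dsc V2 S2"
  shows "distinguishes colR S1 S2 \<longleftrightarrow> distinguishes colG S1 S2"
proof -
  have finite: "finite S1" "finite S2"
    using assms unfolding dsc_def by blast+
  have "determined_by (\<lambda>S. colR S t) (\<lambda>S. colR S (Suc t)) S1 S2"
    and "determined_by (\<lambda>S. colG S t) (\<lambda>S. colG S (Suc t)) S1 S2" for t
    unfolding determined_by_def colR_Suc colG_Suc by (intro exI[of _ prev_colour]; simp)+
  then have "distinguishes colR S1 S2 \<longleftrightarrow> (\<exists>t. histogram colR S1 t \<noteq> histogram colR S2 t)"
    and "distinguishes colG S1 S2 \<longleftrightarrow> (\<exists>t. histogram colG S1 t \<noteq> histogram colG S2 t)"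
    using distinguishes_iff_histograms_differ[where F = colR, OF finite _ colR_stability_propagates[OF assms]]
      distinguishes_iff_histograms_differ[where F = colG, OF finite _ colG_stability_propagates[OF assms]]
    by blast+
  moreover have "(\<exists>t. histogram colR S1 t \<noteq> histogram colR S2 t) \<longleftrightarrow>
      (\<exists>t. histogram colG S1 t \<noteq> histogram colG S2 t)"
    using determined_by_image_mset_eq[OF colR_determined_by_colG[OF assms]]
      determined_by_image_mset_eq[OF colG_determined_by_colR[OF assms]]
    unfolding histogram_def by blast
  ultimately show ?thesis
    by simp
qed

end
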